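(* Let $1\le d<n$ be integers. Then there exists an independent set $\mathcal{A}\subseteq\mathcal{A}(n,d)$ with $|\mathcal{A}|=\binom{n-1}{d}$.
   Context: For integers $1\le d<n$, let $I(n,d)$ be the set of all subsets of $[n]=\{1,\dots,n\}$ of cardinality $d+1$. For $I\in I(n,d)$, let $A_I$ be the set of all $d$-tuples with pairwise distinct entries taken from $I$ (so $|A_I|=(d+1)!$), and let $\mathcal{A}(n,d)=\{A_I : I\in I(n,d)\}$. For $\mathcal{A}\subseteq\mathcal{A}(n,d)$, a $d$-tuple $t$ is called unique with respect to $\mathcal{A}$ if there exists $A\in\mathcal{A}$ with $t\in A$ and $t\notin A'$ for every $A'\in\mathcal{A}\setminus\{A\}$. A set $\mathcal{A}\subseteq\mathcal{A}(n,d)$ is called independent if every nonempty subset of $\mathcal{A}$ has at least one $d$-tuple that is unique with respect to that subset. *)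

theory Defs
  imports Main
begin

definition Iset :: "nat \<Rightarrow> nat \<Rightarrow> nat set set" where
  "Iset n d = {I. I \<subseteq> {1..n} \<and> card I = d + 1}"

definition tuples :: "nat \<Rightarrow> nat set \<Rightarrow> nat list set" where
  "tuples d I = {t. length t = d \<and> distinct t \<and> set t \<subseteq> I}"

definition Afam :: "nat \<Rightarrow> nat \<Rightarrow> nat list set set" where
  "Afam n d = {tuples d I | I. I \<in> Iset n d}"

definition unique_wrt :: "nat list set set \<Rightarrow> nat list \<Rightarrow> bool" where
  "unique_wrt \<A> t \<longleftrightarrow> (\<exists>A\<in>\<A>. t \<in> A \<and> (\<forall>A'\<in>\<A> - {A}. t \<notin> A'))"

definition independent :: "nat list set set \<Rightarrow> bool" where
  "independent \<A> \<longleftrightarrow> (\<forall>\<B>. \<B> \<subseteq> \<A> \<and> \<B> \<noteq> {} \<longrightarrow> (\<exists>t. unique_wrt \<B> t))"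

end

theory Submission
  imports Defs
begin

(* Call a tuple t private to a member A of a family if t lies in A
   and in no other member.  If every member of a family has a private tuple,
   then so does every member of every subfamily, hence the family is
   independent; moreover the members are then pairwise distinct.
   The independent family is the "star" at the point 1: all (d+1)-subsets
   I = insert 1 J of [n] with J a d-subset of {2..n}.  A private tuple of
   A_I is the sorted list of J: any (d+1)-set containing 1 and all of J is
   insert 1 J itself.  There are (n-1) choose d such sets J, which gives
   the cardinality. *)

lemma independent_image_if_private:
  fixes f :: "'a \<Rightarrow> nat list set"
  assumes has_private: "\<And>I. I \<in> S \<Longrightarrow> \<exists>t\<in>f I. \<forall>I'\<in>S. t \<in> f I' \<longrightarrow> I' = I"
  shows "independent (f ` S)"
  unfolding independent_def
proof (intro allI impI)
  fix \<B> assume \<B>: "\<B> \<subseteq> f ` S \<and> \<B> \<noteq> {}"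
  then obtain I where I: "I \<in> S" "f I \<in> \<B>" by blast
  from has_private[OF I(1)] obtain t where t: "t \<in> f I" "\<forall>I'\<in>S. t \<in> f I' \<longrightarrow> I' = I"
    by blast
  have "\<forall>A'\<in>\<B> - {f I}. t \<notin> A'"
    using \<B> t by blast
  then have "unique_wrt \<B> t"
    unfolding unique_wrt_def using I(2) t(1) by blast
  then show "\<exists>t. unique_wrt \<B> t" ..
qed

lemma inj_on_if_private:
  assumes has_private: "\<And>I. I \<in> S \<Longrightarrow> \<exists>t\<in>f I. \<forall>I'\<in>S. t \<in> f I' \<longrightarrow> I' = I"
  shows "inj_on f S"
proof (rule inj_onI)
  fix I I' assume I: "I \<in> S" and I': "I' \<in> S" and eq: "f I = f I'"
  from has_private[OF I] obtain t where "t \<in> f I" "\<forall>I''\<in>S. t \<in> f I'' \<longrightarrow> I'' = I"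
    by blast
  then show "I = I'" using I' eq by simp
qed

definition star :: "nat \<Rightarrow> nat \<Rightarrow> nat set set" where
  "star n d = insert 1 ` {J. J \<subseteq> {2..n} \<and> card J = d}"

lemma star_memE:
  assumes "I \<in> star n d"
  obtains J where "J \<subseteq> {2..n}" "card J = d" "I = insert 1 J"
  using assms unfolding star_def by auto

lemma star_subset_Iset:
  assumes "1 \<le> n"
  shows "star n d \<subseteq> Iset n d"
proof
  fix I assume "I \<in> star n d"
  then obtain J where J: "J \<subseteq> {2..n}" "card J = d" and I: "I = insert 1 J"
    by (rule star_memE)
  have "finite J" "1 \<notin> J" using J(1) by (auto intro: finite_subset)
  then show "I \<in> Iset n d"
    using J I assms unfolding Iset_def by (auto simp: subset_iff)
qed

(* Adding the point 1 is injective on subsets of {2..n}, so the star has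
   as many members as {2..n} has d-subsets. *)
lemma card_star: "card (star n d) = (n - 1) choose d"
proof -
  have "inj_on (insert 1) {J. J \<subseteq> {2..n} \<and> card J = d}"
  proof (rule inj_onI)
    fix J J' assume "J \<in> {J. J \<subseteq> {2..n} \<and> card J = d}"
      "J' \<in> {J. J \<subseteq> {2..n} \<and> card J = d}" "insert 1 J = insert 1 J'"
    moreover have "1 \<notin> J" "1 \<notin> J'" using calculation(1,2) by auto
    ultimately show "J = J'" by (simp add: insert_ident)
  qed
  then have "card (star n d) = card {J. J \<subseteq> {2..n} \<and> card J = d}"
    unfolding star_def by (rule card_image)
  also have "\<dots> = card {2..n} choose d"
    by (rule n_subsets) simp
  finally show ?thesis by simp
qed

lemma eq_insert_if_card:
  assumes "J \<subseteq> I" "a \<in> I" "a \<notin> J" "finite I" "card I = card J + 1"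
  shows "I = insert a J"
proof -
  have "finite J" using assms(1,4) by (rule finite_subset)
  then have "card (insert a J) = card I" using assms(3,5) by simp
  then show ?thesis using assms(1,2,4) card_subset_eq[of I "insert a J"] by auto
qed

lemma star_private_tuple:
  assumes "I \<in> star n d"
  shows "\<exists>t\<in>tuples d I. \<forall>I'\<in>star n d. t \<in> tuples d I' \<longrightarrow> I' = I"
proof -
  obtain J where J: "J \<subseteq> {2..n}" "card J = d" and I: "I = insert 1 J"
    using assms by (rule star_memE)
  have "finite J" using J(1) by (rule finite_subset) simp
  define t where "t = sorted_list_of_set J"
  have set_t: "set t = J" using \<open>finite J\<close> unfolding t_def by simp
  have "t \<in> tuples d I"
    using \<open>finite J\<close> J(2) set_t I unfolding tuples_def t_def by auto
  moreover have "I' = I" if I': "I' \<in> star n d" and t_in: "t \<in> tuples d I'" for I'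
  proof -
    obtain J' where J': "J' \<subseteq> {2..n}" "card J' = d" and I'_eq: "I' = insert 1 J'"
      using I' by (rule star_memE)
    have "finite J'" "1 \<notin> J'" using J'(1) by (auto intro: finite_subset)
    then have "card I' = card J + 1" using I'_eq J'(2) J(2) by simp
    moreover have "J \<subseteq> I'" using t_in set_t unfolding tuples_def by auto
    moreover have "1 \<notin> J" using J(1) by auto
    ultimately show "I' = I"
      using eq_insert_if_card[of J I' 1] I I'_eq \<open>finite J'\<close> by simp
  qed
  ultimately show ?thesis by (intro bexI[of _ t]) auto
qed

theorem mainTheorem4:
  fixes n d :: nat
  assumes "1 \<le> d" and "d < n"
  shows "\<exists>\<A>. \<A> \<subseteq> Afam n d \<and> independent \<A> \<and> card \<A> = (n - 1) choose d"
proof (intro exI conjI)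
  let ?\<A> = "tuples d ` star n d"
  show "?\<A> \<subseteq> Afam n d"
    using star_subset_Iset[of n d] assms unfolding Afam_def by auto
  show "independent ?\<A>"
    using star_private_tuple by (rule independent_image_if_private)
  have "inj_on (tuples d) (star n d)"
    using star_private_tuple by (rule inj_on_if_private)
  then show "card ?\<A> = (n - 1) choose d"
    by (simp add: card_image card_star)
qed

end
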